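(* Let $\Gamma$ be a balanced two-dimensional simplicial complex, and let $W\subseteq V(\Gamma)$ be such that $\tilde H_2(\Gamma[W];\mathbf{k})\neq 0$ but $\tilde H_2(\Gamma[W'];\mathbf{k})=0$ for every proper subset $W'\subsetneq W$. Then $f_2(\Gamma[W])\ge 2|W|-4$.
   Context: A simplicial complex $\Gamma$ on a finite vertex set $V=V(\Gamma)$ is a family of subsets of $V$ (faces) closed under taking subsets; its dimension is $\max\{|F|:F\in\Gamma\}-1$; $f_2$ counts faces with 3 elements. For $W\subseteq V$, $\Gamma[W]=\{F\in\Gamma:F\subseteq W\}$. A two-dimensional complex is balanced if its vertex set can be partitioned into three sets $V_1,V_2,V_3$ such that every face contains at most one vertex from each $V_j$. Fix a field $\mathbf{k}$; $\tilde H_j(\cdot;\mathbf{k})$ is reduced simplicial homology. *)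

theory Defs
  imports Main
begin

definition simplicial_complex :: "'a set set \<Rightarrow> bool" where
  "simplicial_complex \<Gamma> \<longleftrightarrow> finite \<Gamma> \<and> (\<forall>F\<in>\<Gamma>. finite F) \<and>
     (\<forall>F\<in>\<Gamma>. \<forall>G. G \<subseteq> F \<longrightarrow> G \<in> \<Gamma>)"

definition vertices :: "'a set set \<Rightarrow> 'a set" where
  "vertices \<Gamma> = \<Union>\<Gamma>"

text \<open>Dimension = max card of a face minus 1; "two-dimensional" = max face size 3.\<close>
definition two_dimensional :: "'a set set \<Rightarrow> bool" where
  "two_dimensional \<Gamma> \<longleftrightarrow> (\<forall>F\<in>\<Gamma>. card F \<le> 3) \<and> (\<exists>F\<in>\<Gamma>. card F = 3)"

definition balanced2 :: "'a set set \<Rightarrow> bool" where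
  "balanced2 \<Gamma> \<longleftrightarrow> (\<exists>V1 V2 V3. V1 \<union> V2 \<union> V3 = vertices \<Gamma> \<and>
     V1 \<inter> V2 = {} \<and> V1 \<inter> V3 = {} \<and> V2 \<inter> V3 = {} \<and>
     (\<forall>F\<in>\<Gamma>. card (F \<inter> V1) \<le> 1 \<and> card (F \<inter> V2) \<le> 1 \<and> card (F \<inter> V3) \<le> 1))"

definition induced :: "'a set set \<Rightarrow> 'a set \<Rightarrow> 'a set set" where
  "induced \<Gamma> W = {F \<in> \<Gamma>. F \<subseteq> W}"

definition f2 :: "'a set set \<Rightarrow> nat" where
  "f2 \<Gamma> = card {F \<in> \<Gamma>. card F = 3}"

text \<open>Faces are oriented by the linear
  order on vertices.
  Faces of dimension -1 (the empty face) are included, so the homology is reduced.\<close>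
definition chains :: "'k::field itself \<Rightarrow> 'a set set \<Rightarrow> nat \<Rightarrow> ('a set \<Rightarrow> 'k) set" where
  "chains _ \<Gamma> j = {c. \<forall>F. c F \<noteq> 0 \<longrightarrow> F \<in> \<Gamma> \<and> card F = j + 1}"

definition incidence_sign :: "'a::linorder set \<Rightarrow> 'a \<Rightarrow> 'k::field" where
  "incidence_sign F v = (-1) ^ card {u \<in> F. u < v}"

text \<open>Boundary map from j-chains to (j-1)-chains (for j = 0: the augmentation onto the
  empty face).\<close>
definition boundary :: "'a::linorder set set \<Rightarrow> nat \<Rightarrow> ('a set \<Rightarrow> 'k::field) \<Rightarrow> ('a set \<Rightarrow> 'k)" where
  "boundary \<Gamma> j c = (\<lambda>G. if G \<in> \<Gamma> \<and> card G = j then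
      (\<Sum>F\<in>{F \<in> \<Gamma>. card F = j + 1 \<and> G \<subseteq> F}. incidence_sign F (the_elem (F - G)) * c F)
    else 0)"

definition reduced_homology_nonzero ::
  "'k::field itself \<Rightarrow> 'a::linorder set set \<Rightarrow> nat \<Rightarrow> bool" where
  "reduced_homology_nonzero K \<Gamma> j \<longleftrightarrow>
     (\<exists>z \<in> chains K \<Gamma> j. boundary \<Gamma> j z = (\<lambda>_. 0) \<and>
        z \<notin> boundary \<Gamma> (Suc j) ` chains K \<Gamma> (Suc j))"

end

theory Submission
  imports Defs "HOL-Library.Function_Algebras" "HOL.Vector_Spaces"
begin

text \<open>
  Let \<open>z\<close> be a nonzero 2-cycle of \<open>D = \<Gamma>[W]\<close> whose support \<open>S\<close> (a set of
  triangles) is minimal, and let \<open>V = \<Union>S\<close> and \<open>E\<close> the set of edges of triangles in \<open>S\<close>.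
  \<^item> Every edge in \<open>E\<close> lies in at least two triangles of \<open>S\<close> (otherwise \<open>\<partial>z \<noteq> 0\<close>), so
    double counting gives \<open>2|E| \<le> 3|S|\<close>.
  \<^item> Minimality makes \<open>\<partial>\<chi>\<^sub>T\<close>, \<open>T \<in> S - {T\<^sub>0}\<close>, linearly independent and makes the edge graph
    on \<open>V\<close> connected; hence the edge-to-vertex boundary \<open>\<partial>\<^sub>1\<close> on the span of the edge
    indicators has a kernel of dimension \<open>\<ge> |S| - 1\<close> and an image of dimension
    \<open>\<ge> |V| - 1\<close>, giving \<open>|S| + |V| \<le> |E| + 2\<close>.
  Together \<open>2|V| \<le> |S| + 4\<close>.  Minimality of \<open>W\<close> forces \<open>V = W\<close>, and \<open>|S| \<le> f\<^sub>2(\<Gamma>[W])\<close>.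
\<close>


subsection \<open>A kernel/image counting lemma\<close>

context linear
begin

lemma lift_image_basis:
  assumes "finite X"
  obtains Z where "Z \<subseteq> X" "inj_on f Z" "vs2.independent (f ` Z)" "f ` X \<subseteq> vs2.span (f ` Z)"
proof -
  obtain B where B: "B \<subseteq> f ` X" "vs2.independent B" "f ` X \<subseteq> vs2.span B"
    using vs2.maximal_independent_subset[of "f ` X"] by blast
  have "\<forall>b\<in>B. \<exists>x\<in>X. f x = b" using B(1) by blast
  then obtain g where g: "\<And>b. b \<in> B \<Longrightarrow> g b \<in> X \<and> f (g b) = b"
    by metis
  have "f ` g ` B = B" using g by (auto simp: image_image)
  moreover have "inj_on f (g ` B)" using g by (auto intro!: inj_onI)
  moreover have "g ` B \<subseteq> X" using g by auto
  ultimately show ?thesis using that B by metis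
qed

lemma independent_kernel_Un:
  assumes K: "finite K" "vs1.independent K" "\<And>k. k \<in> K \<Longrightarrow> f k = 0"
    and Z: "finite Z" "inj_on f Z" "vs2.independent (f ` Z)"
  shows "K \<inter> Z = {}" "vs1.independent (K \<union> Z)"
proof -
  have "0 \<notin> f ` Z" using Z(3) vs2.dependent_zero by metis
  then show disj: "K \<inter> Z = {}" using K(3) by (metis disjoint_iff imageI)
  show "vs1.independent (K \<union> Z)"
  proof
    assume "vs1.dependent (K \<union> Z)"
    then obtain u where u: "\<exists>v\<in>K \<union> Z. u v \<noteq> 0" "(\<Sum>v\<in>K \<union> Z. u v *a v) = 0"
      using vs1.dependent_finite K(1) Z(1) by blast
    have split: "(\<Sum>v\<in>K. u v *a v) + (\<Sum>v\<in>Z. u v *a v) = 0"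
      using u(2) disj K(1) Z(1) by (simp add: sum.union_disjoint)
    have "f (\<Sum>v\<in>K. u v *a v) = 0" using K(3) by (simp add: sum scale)
    then have "f (\<Sum>v\<in>Z. u v *a v) = 0" using split by (metis add add_0 zero)
    then have "(\<Sum>b\<in>f ` Z. u (the_inv_into Z f b) *b b) = 0"
      using Z(2) by (simp add: sum scale sum.reindex the_inv_into_f_f)
    then have "\<forall>b\<in>f ` Z. u (the_inv_into Z f b) = 0"
      using Z(3) unfolding vs2.dependent_finite[OF finite_imageI[OF Z(1)]]
      by (auto dest: spec[of _ "\<lambda>b. u (the_inv_into Z f b)"])
    then have uZ: "\<forall>v\<in>Z. u v = 0"
      using Z(2) by (auto simp: the_inv_into_f_f)
    then have "(\<Sum>v\<in>K. u v *a v) = 0" using split by simp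
    then have "\<forall>v\<in>K. u v = 0" using K(2) vs1.dependent_finite[OF K(1)] by blast
    with uZ u(1) show False by blast
  qed
qed

text \<open>Rank--nullity as an inequality, for the restriction of \<open>f\<close> to the span of a finite set
  \<open>X\<close>: an independent set in the kernel and an independent set in the image together have
  at most \<open>|X|\<close> elements.\<close>
lemma card_kernel_plus_card_image_le:
  assumes finX: "finite X"
    and K: "K \<subseteq> vs1.span X" "vs1.independent K" "\<And>k. k \<in> K \<Longrightarrow> f k = 0"
    and Y: "vs2.independent Y" "Y \<subseteq> vs2.span (f ` X)"
  shows "card K + card Y \<le> card X"
proof -
  obtain Z where Z: "Z \<subseteq> X" "inj_on f Z" "vs2.independent (f ` Z)" "f ` X \<subseteq> vs2.span (f ` Z)"
    using lift_image_basis[OF finX] by blast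
  have finZ: "finite Z" using Z(1) finX finite_subset by blast
  have finK: "finite K" using vs1.independent_span_bound[OF finX K(2) K(1)] by blast
  have "vs2.span (f ` X) \<subseteq> vs2.span (f ` Z)"
    using Z(4) by (simp add: vs2.span_minimal)
  then have "card Y \<le> card (f ` Z)"
    using vs2.independent_span_bound[OF finite_imageI[OF finZ] Y(1)] Y(2) by simp
  also have "card (f ` Z) = card Z" using Z(2) by (rule card_image)
  finally have cardY: "card Y \<le> card Z" .
  note KZ = independent_kernel_Un[OF finK K(2,3) finZ Z(2,3)]
  have "Z \<subseteq> vs1.span X" using Z(1) vs1.span_superset by auto
  then have "card (K \<union> Z) \<le> card X"
    using vs1.independent_span_bound[OF finX KZ(2)] K(1) by simp
  moreover have "card (K \<union> Z) = card K + card Z"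
    using KZ(1) finZ finK card_Un_disjoint by blast
  ultimately show ?thesis using cardY by simp
qed

end


subsection \<open>The vector space of field-valued functions\<close>

definition sc :: "'k::field \<Rightarrow> ('b \<Rightarrow> 'k) \<Rightarrow> ('b \<Rightarrow> 'k)" where
  "sc c f = (\<lambda>x. c * f x)"

interpretation vs: vector_space "sc :: 'k::field \<Rightarrow> ('b \<Rightarrow> 'k) \<Rightarrow> _"
  by unfold_locales (auto simp: sc_def fun_eq_iff algebra_simps)

lemma sum_fun_apply: "(\<Sum>i\<in>I. f i) x = (\<Sum>i\<in>I. f i x)"
  by (induction I rule: infinite_finite_induct) auto

lemma linear_scI:
  fixes f :: "('b \<Rightarrow> 'k::field) \<Rightarrow> ('c \<Rightarrow> 'k)"
  assumes "\<And>x y. f (x + y) = f x + f y" "\<And>c x. f (sc c x) = sc c (f x)"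
  shows "Vector_Spaces.linear sc sc f"
  using assms by (simp add: Vector_Spaces.linear_iff vs.vector_space_axioms)

lemma independent_familyI:
  fixes f :: "'i \<Rightarrow> ('b \<Rightarrow> 'k::field)"
  assumes fin: "finite I" and h: "\<And>c. (\<Sum>i\<in>I. sc (c i) (f i)) = 0 \<Longrightarrow> \<forall>i\<in>I. c i = 0"
  shows "inj_on f I" "vs.independent (f ` I)"
proof -
  show inj: "inj_on f I"
  proof (rule inj_onI, rule ccontr)
    fix i j assume ij: "i \<in> I" "j \<in> I" "f i = f j" "i \<noteq> j"
    define c where "c = (\<lambda>k. if k = i then (1::'k) else if k = j then -1 else 0)"
    have "(\<Sum>k\<in>I. sc (c k) (f k)) = (\<Sum>k\<in>{i,j}. sc (c k) (f k))"
      by (rule sum.mono_neutral_right) (use fin ij in \<open>auto simp: c_def sc_def fun_eq_iff\<close>)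
    also have "\<dots> = 0" using ij by (simp add: c_def sc_def fun_eq_iff)
    finally have "c i = 0" using h ij by blast
    then show False by (simp add: c_def)
  qed
  show "vs.independent (f ` I)"
  proof
    assume "vs.dependent (f ` I)"
    then obtain u where u: "\<exists>v\<in>f ` I. u v \<noteq> 0" "(\<Sum>v\<in>f ` I. sc (u v) v) = 0"
      using vs.dependent_finite[of "f ` I"] fin by auto
    have "(\<Sum>i\<in>I. sc (u (f i)) (f i)) = 0"
      using u(2) by (simp add: sum.reindex[OF inj])
    then have "\<forall>i\<in>I. u (f i) = 0" by (rule h)
    with u(1) show False by auto
  qed
qed

definition chi :: "'b \<Rightarrow> 'b \<Rightarrow> 'k::field" where
  "chi x = (\<lambda>y. if y = x then 1 else 0)"

definition chain_support :: "('b \<Rightarrow> 'k::zero) \<Rightarrow> 'b set" where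
  "chain_support c = {x. c x \<noteq> 0}"

lemma sum_chi_apply:
  assumes "finite E"
  shows "(\<Sum>x\<in>E. sc (c x) (chi x)) y = (if y \<in> E then c y else (0::'k::field))"
proof -
  have "(\<Sum>x\<in>E. sc (c x) (chi x)) y = (\<Sum>x\<in>E. if y = x then c x else 0)"
    unfolding sum_fun_apply by (intro sum.cong) (auto simp: sc_def chi_def)
  also have "\<dots> = (if y \<in> E then c y else 0)" using assms by simp
  finally show ?thesis .
qed

lemma in_span_chi:
  fixes f :: "'b \<Rightarrow> 'k::field"
  assumes "finite E" "chain_support f \<subseteq> E"
  shows "f \<in> vs.span (chi ` E)"
proof -
  have "f = (\<Sum>x\<in>E. sc (f x) (chi x))"
    using assms by (auto simp: fun_eq_iff sum_chi_apply chain_support_def)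
  also have "\<dots> \<in> vs.span (chi ` E)" by (intro vs.span_sum vs.span_scale vs.span_base) auto
  finally show ?thesis .
qed


subsection \<open>Boundary maps\<close>

lemma linear_boundary: "Vector_Spaces.linear sc sc (boundary D j :: ('a::linorder set \<Rightarrow> 'k::field) \<Rightarrow> _)"
  by (rule linear_scI)
     (auto simp: boundary_def sc_def fun_eq_iff sum.distrib sum_distrib_left distrib_left
        mult.left_commute)

lemma boundary_chi:
  fixes D :: "'a::linorder set set"
  assumes cx: "simplicial_complex D" and TD: "T \<in> D" and T3: "card T = Suc j"
  shows "boundary D j (chi T :: 'a set \<Rightarrow> 'k::field) =
     (\<lambda>G. if card G = j \<and> G \<subseteq> T then incidence_sign T (the_elem (T - G)) else 0)"
proof (rule ext)
  fix G
  have sub: "\<And>F G. F \<in> D \<Longrightarrow> G \<subseteq> F \<Longrightarrow> G \<in> D" and finD: "finite D"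
    using cx by (auto simp: simplicial_complex_def)
  show "boundary D j (chi T :: 'a set \<Rightarrow> 'k) G =
     (if card G = j \<and> G \<subseteq> T then incidence_sign T (the_elem (T - G)) else 0)"
  proof (cases "G \<in> D \<and> card G = j")
    case True
    define A where "A = {F \<in> D. card F = j + 1 \<and> G \<subseteq> F}"
    have "boundary D j (chi T :: 'a set \<Rightarrow> 'k) G
        = (\<Sum>F\<in>A. if F = T then incidence_sign T (the_elem (T - G)) else 0)"
      using True by (auto simp: boundary_def A_def chi_def intro!: sum.cong)
    also have "\<dots> = (if T \<in> A then incidence_sign T (the_elem (T - G)) else 0)"
      using finD by (simp add: A_def)
    finally show ?thesis using True TD T3 by (auto simp: A_def)
  next
    case False
    then show ?thesis using sub[OF TD] by (auto simp: boundary_def)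
  qed
qed

lemma boundary_triangle_in_span:
  fixes D :: "'a::linorder set set"
  assumes cx: "simplicial_complex D" and TD: "T \<in> D" and T3: "card T = 3"
    and finE: "finite E" and edges: "\<And>G. G \<subseteq> T \<Longrightarrow> card G = 2 \<Longrightarrow> G \<in> E"
  shows "boundary D 2 (chi T :: 'a set \<Rightarrow> 'k::field) \<in> vs.span (chi ` E)"
proof -
  have "card T = Suc 2" using T3 by simp
  then have "chain_support (boundary D 2 (chi T :: 'a set \<Rightarrow> 'k)) \<subseteq> E"
    using edges by (auto simp: boundary_chi[OF cx TD] chain_support_def split: if_splits)
  with finE show ?thesis by (rule in_span_chi)
qed

text \<open>The boundary of 1-chains, evaluated on the vertices of a finite set \<open>V\<close>: an edge
  \<open>{x, v}\<close> with \<open>x < v\<close> has boundary \<open>v - x\<close>.\<close>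
definition edge_boundary :: "'a::linorder set \<Rightarrow> ('a set \<Rightarrow> 'k::field) \<Rightarrow> ('a \<Rightarrow> 'k)" where
  "edge_boundary V f = (\<lambda>v. \<Sum>x\<in>V - {v}. if x < v then f {x, v} else - f {x, v})"

lemma linear_edge_boundary: "Vector_Spaces.linear sc sc (edge_boundary V :: ('a::linorder set \<Rightarrow> 'k::field) \<Rightarrow> _)"
proof (rule linear_scI)
  show "edge_boundary V (f + g) = edge_boundary V f + edge_boundary V g" for f g :: "'a set \<Rightarrow> 'k"
    unfolding edge_boundary_def plus_fun_def sum.distrib[symmetric] by (rule ext, rule sum.cong) auto
  show "edge_boundary V (sc c f) = sc c (edge_boundary V f)" for c and f :: "'a set \<Rightarrow> 'k"
    unfolding edge_boundary_def sc_def sum_distrib_left by (rule ext, rule sum.cong) auto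
qed

lemma edge_boundary_chi:
  fixes u w :: "'a::linorder"
  assumes "u \<noteq> w" "u \<in> V" "w \<in> V" "finite V"
  shows "edge_boundary V (chi {u, w}) = sc (if u < w then 1 else -1) (chi w - chi u :: 'a \<Rightarrow> 'k::field)"
proof (rule ext)
  fix v
  have e: "\<And>x. ({x, v} = {u, w}) = ((x = u \<and> v = w) \<or> (x = w \<and> v = u))"
    using assms(1) by (auto simp: doubleton_eq_iff)
  show "edge_boundary V (chi {u, w}) v = sc (if u < w then 1 else -1) (chi w - chi u :: 'a \<Rightarrow> 'k) v"
  proof (cases "v = w \<or> v = u")
    case True
    then show ?thesis
    proof
      assume v: "v = w"
      have "edge_boundary V (chi {u, w}) v
          = (\<Sum>x\<in>V - {v}. if x = u then (if u < w then 1 else -1) else (0::'k))"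
        unfolding edge_boundary_def chi_def using v assms(1) by (intro sum.cong) (auto simp: e)
      also have "\<dots> = (if u < w then 1 else -1)" using assms v by (subst sum.delta) auto
      finally show ?thesis using v assms(1) by (simp add: chi_def sc_def)
    next
      assume v: "v = u"
      have "edge_boundary V (chi {u, w}) v
          = (\<Sum>x\<in>V - {v}. if x = w then (if w < u then 1 else -1) else (0::'k))"
        unfolding edge_boundary_def chi_def using v assms(1) by (intro sum.cong) (auto simp: e)
      also have "\<dots> = (if w < u then 1 else -1)" using assms v by (subst sum.delta) auto
      finally show ?thesis using v assms(1) by (auto simp: chi_def sc_def)
    qed
  next
    case False
    then have "\<And>x. {x, v} \<noteq> {u, w}" by (auto simp: e)
    then show ?thesis unfolding edge_boundary_def chi_def sc_def using False by (simp cong: if_cong)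
  qed
qed

lemma card3_sorted:
  fixes T :: "'a::linorder set"
  assumes "card T = 3"
  obtains a b c where "a < b" "b < c" "T = {a, b, c}"
proof -
  have fin: "finite T" using assms card.infinite by force
  define xs where "xs = sorted_list_of_set T"
  have "length xs = 3" using assms fin by (simp add: xs_def)
  then obtain a b c where xs: "xs = [a, b, c]"
    by (metis length_0_conv length_Suc_conv numeral_3_eq_3)
  have "sorted_wrt (<) xs" "set xs = T" using fin by (simp_all add: xs_def)
  then show ?thesis using xs that by auto
qed

lemma boundary_triangle_values:
  fixes D :: "'a::linorder set set"
  assumes cx: "simplicial_complex D" and TD: "T \<in> D" and T: "T = {a, b, c}"
    and abc: "a < b" "b < c"
  defines "g \<equiv> boundary D 2 (chi T) :: 'a set \<Rightarrow> 'k::field"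
  shows "g {a, b} = 1" "g {a, c} = -1" "g {b, c} = 1" "\<And>G. \<not> G \<subseteq> T \<Longrightarrow> g G = 0"
proof -
  have "card T = Suc 2" using T abc by (auto simp: card_insert_if)
  then have g: "g G = (if card G = 2 \<and> G \<subseteq> T then incidence_sign T (the_elem (T - G)) else 0)" for G
    by (simp add: g_def boundary_chi[OF cx TD])
  have e: "{u \<in> T. u < a} = {}" "{u \<in> T. u < b} = {a}" "{u \<in> T. u < c} = {a, b}"
    using abc T by auto
  have sign: "incidence_sign T a = (1::'k)" "incidence_sign T b = (-1::'k)"
      "incidence_sign T c = (1::'k)"
    unfolding incidence_sign_def e using abc by simp_all
  have "T - {a, b} = {c}" "T - {a, c} = {b}" "T - {b, c} = {a}" using abc T by auto
  then show "g {a, b} = 1" "g {a, c} = -1" "g {b, c} = 1"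
    using abc T sign by (simp_all add: g card_insert_if)
  show "\<And>G. \<not> G \<subseteq> T \<Longrightarrow> g G = 0" by (simp add: g)
qed

text \<open>\<open>\<partial>\<^sub>1 \<circ> \<partial>\<^sub>2 = 0\<close> on a triangle: at each vertex the two incident edges of the triangle
  contribute opposite signs.\<close>
lemma edge_boundary_triangle_boundary:
  fixes D :: "'a::linorder set set"
  assumes cx: "simplicial_complex D" and TD: "T \<in> D" and T3: "card T = 3"
    and TV: "T \<subseteq> V" and finV: "finite V"
  shows "edge_boundary V (boundary D 2 (chi T) :: 'a set \<Rightarrow> 'k::field) = 0"
proof -
  define g where "g = (boundary D 2 (chi T) :: 'a set \<Rightarrow> 'k)"
  obtain a b c where abc: "a < b" "b < c" and T: "T = {a, b, c}" using card3_sorted[OF T3] by blast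
  note gT = boundary_triangle_values[OF cx TD T abc, where 'k = 'k, folded g_def]
  have ord: "\<not> b < a" "\<not> c < a" "\<not> c < b" "a < c" using abc by auto
  have "edge_boundary V g v = 0" for v
  proof -
    define h where "h = (\<lambda>x. if x < v then g {x, v} else - g {x, v})"
    have outside: "\<And>x. x \<notin> T \<or> v \<notin> T \<Longrightarrow> h x = 0" by (auto simp: h_def gT(4))
    then have "edge_boundary V g v = (\<Sum>x\<in>T - {v}. h x)"
      unfolding edge_boundary_def h_def[symmetric] using finV TV
      by (intro sum.mono_neutral_right) auto
    also have "\<dots> = 0"
    proof (cases "v \<in> T")
      case True
      then consider "v = a" | "v = b" | "v = c" using T by blast
      then show ?thesis
      proof cases
        case 1
        then have "T - {v} = {b, c}" using T abc by auto
        then show ?thesis using 1 abc ord gT by (simp add: h_def insert_commute)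
      next
        case 2
        then have "T - {v} = {a, c}" using T abc by auto
        then show ?thesis using 2 abc ord gT by (simp add: h_def insert_commute)
      next
        case 3
        then have "T - {v} = {a, b}" using T abc by auto
        then show ?thesis using 3 abc ord gT by (simp add: h_def insert_commute)
      qed
    qed (use outside in simp)
    finally show ?thesis .
  qed
  then show ?thesis by (simp add: g_def fun_eq_iff)
qed


subsection \<open>Cycles and homology in degree 2\<close>

lemma chain_support_chains: "c \<in> chains K D j \<Longrightarrow> chain_support c \<subseteq> {F \<in> D. card F = j + 1}"
  by (auto simp: chains_def chain_support_def)

lemma finite_chain_support: "finite D \<Longrightarrow> c \<in> chains K D j \<Longrightarrow> finite (chain_support c)"
  using chain_support_chains[of c K D j] by (auto intro: finite_subset)

lemma cycle_face_in_two_cofaces: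
  fixes z :: "'a::linorder set \<Rightarrow> 'k::field"
  assumes cx: "simplicial_complex D" and z: "z \<in> chains TYPE('k) D j" "boundary D j z = 0"
    and F: "F \<in> chain_support z" and GF: "G \<subseteq> F" and G: "card G = j"
  shows "\<exists>F'\<in>chain_support z. F' \<noteq> F \<and> G \<subseteq> F'"
proof (rule ccontr)
  assume "\<not> ?thesis"
  then have only: "\<And>F'. z F' \<noteq> 0 \<Longrightarrow> G \<subseteq> F' \<Longrightarrow> F' = F" by (auto simp: chain_support_def)
  have FD: "F \<in> D" "card F = j + 1" using chain_support_chains[OF z(1)] F by auto
  have GD: "G \<in> D" using cx FD GF by (auto simp: simplicial_complex_def)
  define A where "A = {F \<in> D. card F = j + 1 \<and> G \<subseteq> F}"
  have finA: "finite A" using cx by (simp add: simplicial_complex_def A_def)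
  have "boundary D j z G = (\<Sum>F'\<in>A. incidence_sign F' (the_elem (F' - G)) * z F')"
    using GD G by (simp add: boundary_def A_def)
  also have "\<dots> = (\<Sum>F'\<in>A. if F' = F then incidence_sign F (the_elem (F - G)) * z F else 0)"
    using only by (intro sum.cong) (auto simp: A_def)
  also have "\<dots> = incidence_sign F (the_elem (F - G)) * z F"
    using finA FD GF by (simp add: A_def)
  finally have "boundary D j z G = incidence_sign F (the_elem (F - G)) * z F" .
  moreover have "incidence_sign F (the_elem (F - G)) * z F \<noteq> (0::'k)"
    using F by (simp add: chain_support_def incidence_sign_def)
  ultimately show False using z(2) by (simp add: zero_fun_def fun_eq_iff)
qed

text \<open>Restricting a cycle to the faces inside a vertex set \<open>C\<close> gives a cycle, provided every
  face of its support meeting \<open>C\<close> lies in \<open>C\<close> (a union of connected components).\<close>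
lemma boundary_restrict_closed:
  fixes z :: "'a::linorder set \<Rightarrow> 'k::field"
  assumes cyc: "boundary D j z = 0" and j: "0 < j"
    and closed: "\<And>F. F \<in> chain_support z \<Longrightarrow> F \<inter> C \<noteq> {} \<Longrightarrow> F \<subseteq> C"
  shows "boundary D j (\<lambda>F. if F \<subseteq> C then z F else 0) = 0"
proof (rule ext)
  fix G
  show "boundary D j (\<lambda>F. if F \<subseteq> C then z F else 0) G = 0 G"
  proof (cases "G \<in> D \<and> card G = j")
    case True
    then have "G \<noteq> {}" using j by auto
    then have restrict: "(if F \<subseteq> C then z F else 0) = (if G \<subseteq> C then z F else 0)" if "G \<subseteq> F" for F
      using that closed by (auto simp: chain_support_def)
    have "boundary D j (\<lambda>F. if F \<subseteq> C then z F else 0) G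
        = (if G \<subseteq> C then boundary D j z G else 0)"
      using True by (auto simp: boundary_def restrict intro!: sum.cong)
    then show ?thesis using cyc by simp
  qed (auto simp: boundary_def)
qed

lemma cycle_of_subcomplex:
  fixes z :: "'a::linorder set \<Rightarrow> 'k::field"
  assumes sub: "D' \<subseteq> D" and finD: "finite D" and z: "z \<in> chains K D j" "boundary D j z = 0"
    and supp: "chain_support z \<subseteq> D'"
  shows "z \<in> chains K D' j" "boundary D' j z = 0"
proof -
  show "z \<in> chains K D' j" using z(1) supp by (auto simp: chains_def chain_support_def)
  show "boundary D' j z = 0"
  proof (rule ext)
    fix G
    show "boundary D' j z G = 0 G"
    proof (cases "G \<in> D' \<and> card G = j")
      case True
      have "boundary D' j z G
          = (\<Sum>F\<in>{F \<in> D'. card F = j + 1 \<and> G \<subseteq> F}. incidence_sign F (the_elem (F - G)) * z F)"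
        using True by (simp add: boundary_def)
      also have "\<dots> = (\<Sum>F\<in>{F \<in> D. card F = j + 1 \<and> G \<subseteq> F}. incidence_sign F (the_elem (F - G)) * z F)"
        using sub finD supp by (intro sum.mono_neutral_left) (auto simp: chain_support_def)
      also have "\<dots> = boundary D j z G" using True sub by (auto simp: boundary_def)
      finally show ?thesis using fun_cong[OF z(2), of G] by simp
    qed (auto simp: boundary_def)
  qed
qed

lemma chains_above_dimension:
  assumes "\<forall>F\<in>D. card F \<le> 3"
  shows "chains K D 3 = {0}"
  using assms by (fastforce simp: chains_def fun_eq_iff)

text \<open>In a complex of dimension at most 2 there are no 2-boundaries, so \<open>H\<^sub>2 \<noteq> 0\<close> means
  that a nonzero 2-cycle exists.\<close>
lemma reduced_homology2_iff:
  fixes D :: "'a::linorder set set"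
  assumes "\<forall>F\<in>D. card F \<le> 3"
  shows "reduced_homology_nonzero TYPE('k::field) D 2 \<longleftrightarrow>
    (\<exists>z\<in>chains TYPE('k) D 2. boundary D 2 z = 0 \<and> z \<noteq> 0)"
proof -
  have "boundary D (Suc 2) (0 :: 'a set \<Rightarrow> 'k) = 0" by (simp add: boundary_def fun_eq_iff)
  then have "boundary D (Suc 2) ` chains TYPE('k) D (Suc 2) = {0 :: 'a set \<Rightarrow> 'k}"
    using chains_above_dimension[OF assms, of "TYPE('k)"] by simp
  then show ?thesis by (auto simp: reduced_homology_nonzero_def zero_fun_def)
qed

lemma simplicial_complex_induced:
  "simplicial_complex \<Gamma> \<Longrightarrow> simplicial_complex (induced \<Gamma> W)"
  by (auto simp: simplicial_complex_def induced_def)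

lemma cycle_support_covers_homology_minimal_set:
  fixes z :: "'a::linorder set \<Rightarrow> 'k::field"
  assumes cx: "simplicial_complex \<Gamma>" and dim: "\<forall>F\<in>\<Gamma>. card F \<le> 3"
    and z: "z \<in> chains TYPE('k) (induced \<Gamma> W) 2" "boundary (induced \<Gamma> W) 2 z = 0" "z \<noteq> 0"
    and minW: "\<And>W'. W' \<subset> W \<Longrightarrow> \<not> reduced_homology_nonzero TYPE('k) (induced \<Gamma> W') 2"
  shows "\<Union>(chain_support z) = W"
proof (rule ccontr)
  define S where "S = chain_support z"
  have S: "S \<subseteq> induced \<Gamma> W" using chain_support_chains[OF z(1)] by (auto simp: S_def)
  assume "\<Union>(chain_support z) \<noteq> W"
  then have psub: "\<Union>S \<subset> W" using S by (auto simp: S_def induced_def)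
  have "induced \<Gamma> (\<Union>S) \<subseteq> induced \<Gamma> W" "S \<subseteq> induced \<Gamma> (\<Union>S)" "finite (induced \<Gamma> W)"
    using psub S cx by (auto simp: induced_def simplicial_complex_def)
  then have "z \<in> chains TYPE('k) (induced \<Gamma> (\<Union>S)) 2" "boundary (induced \<Gamma> (\<Union>S)) 2 z = 0"
    using cycle_of_subcomplex z by (auto simp: S_def)
  then have "reduced_homology_nonzero TYPE('k) (induced \<Gamma> (\<Union>S)) 2"
    using z(3) dim reduced_homology2_iff[of "induced \<Gamma> (\<Union>S)"] by (auto simp: induced_def)
  then show False using minW[OF psub] by simp
qed


subsection \<open>Minimal 2-cycles\<close>

definition edges_of :: "'a set set \<Rightarrow> 'a set set" where
  "edges_of S = {G. card G = 2 \<and> (\<exists>F\<in>S. G \<subseteq> F)}"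

definition adjacent :: "'a set set \<Rightarrow> ('a \<times> 'a) set" where
  "adjacent S = {(x, y). {x, y} \<in> edges_of S}"

definition minimal_2cycle :: "'a::linorder set set \<Rightarrow> ('a set \<Rightarrow> 'k::field) \<Rightarrow> bool" where
  "minimal_2cycle D z \<longleftrightarrow> z \<in> chains TYPE('k) D 2 \<and> boundary D 2 z = 0 \<and> z \<noteq> 0 \<and>
     (\<forall>y :: 'a set \<Rightarrow> 'k. boundary D 2 y = 0 \<longrightarrow> chain_support y \<subset> chain_support z \<longrightarrow> y = 0)"

text \<open>A nonzero 2-cycle of least support size is minimal.\<close>
lemma minimal_2cycle_exists:
  fixes z0 :: "'a::linorder set \<Rightarrow> 'k::field"
  assumes finD: "finite D" and z0: "z0 \<in> chains TYPE('k) D 2" "boundary D 2 z0 = 0" "z0 \<noteq> 0"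
  shows "\<exists>z :: 'a set \<Rightarrow> 'k. minimal_2cycle D z"
proof -
  define P where "P = (\<lambda>y :: 'a set \<Rightarrow> 'k. y \<in> chains TYPE('k) D 2 \<and> boundary D 2 y = 0 \<and> y \<noteq> 0)"
  obtain z where z: "P z" and least: "\<And>y. P y \<Longrightarrow> card (chain_support z) \<le> card (chain_support y)"
    using ex_has_least_nat[of P z0 "\<lambda>y. card (chain_support y)"] z0 by (auto simp: P_def)
  have "y = 0" if "boundary D 2 y = 0" "chain_support y \<subset> chain_support z"
    for y :: "'a set \<Rightarrow> 'k"
  proof (rule ccontr)
    assume "y \<noteq> 0"
    moreover have "y \<in> chains TYPE('k) D 2"
      using that(2) chain_support_chains[of z] z by (auto simp: P_def chains_def chain_support_def)
    ultimately have "card (chain_support z) \<le> card (chain_support y)"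
      using least that(1) by (simp add: P_def)
    moreover have "finite (chain_support z)"
      using finite_chain_support[OF finD] z unfolding P_def by blast
    ultimately show False using psubset_card_mono[OF _ that(2)] by simp
  qed
  then show ?thesis using z by (auto simp: minimal_2cycle_def P_def)
qed

lemma minimal_2cycle_support:
  fixes z :: "'a::linorder set \<Rightarrow> 'k::field"
  assumes cx: "simplicial_complex D" and min: "minimal_2cycle D z"
  shows "finite (chain_support z)" "chain_support z \<subseteq> D"
    "\<And>F. F \<in> chain_support z \<Longrightarrow> card F = 3" "chain_support z \<noteq> {}"
proof -
  have z: "z \<in> chains TYPE('k) D 2" "z \<noteq> 0" using min by (auto simp: minimal_2cycle_def)
  show "finite (chain_support z)"
    using cx z(1) finite_chain_support by (auto simp: simplicial_complex_def)
  show "chain_support z \<subseteq> D" "\<And>F. F \<in> chain_support z \<Longrightarrow> card F = 3"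
    using chain_support_chains[OF z(1)] by auto
  show "chain_support z \<noteq> {}" using z(2) by (auto simp: chain_support_def fun_eq_iff)
qed

text \<open>The edge graph of the support of a minimal 2-cycle is connected: the part of the cycle
  on the component of \<open>v\<^sub>0\<close> is again a cycle, with smaller support unless it is everything.\<close>
lemma minimal_2cycle_connected:
  fixes z :: "'a::linorder set \<Rightarrow> 'k::field"
  assumes min: "minimal_2cycle D z" and v0: "v0 \<in> \<Union>(chain_support z)"
  shows "\<Union>(chain_support z) \<subseteq> {u. (v0, u) \<in> (adjacent (chain_support z))\<^sup>*}"
proof (rule ccontr)
  define S where "S = chain_support z"
  define C where "C = {u. (v0, u) \<in> (adjacent S)\<^sup>*}"
  have closed: "F \<subseteq> C" if FS: "F \<in> S" and FC: "F \<inter> C \<noteq> {}" for F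
  proof
    fix y assume "y \<in> F"
    obtain x where x: "x \<in> F" "x \<in> C" using FC by blast
    show "y \<in> C"
    proof (cases "x = y")
      case False
      then have "(x, y) \<in> adjacent S"
        using x \<open>y \<in> F\<close> FS by (auto simp: adjacent_def edges_of_def)
      then show ?thesis using x(2) by (auto simp: C_def intro: rtrancl_into_rtrancl)
    qed (use x in simp)
  qed
  define z' where "z' = (\<lambda>F. if F \<subseteq> C then z F else 0)"
  have "boundary D 2 z' = 0"
    unfolding z'_def using min closed
    by (intro boundary_restrict_closed) (auto simp: minimal_2cycle_def S_def)
  assume "\<not> \<Union>(chain_support z) \<subseteq> {u. (v0, u) \<in> (adjacent (chain_support z))\<^sup>*}"
  then obtain F1 where "F1 \<in> S" "\<not> F1 \<subseteq> C" by (auto simp: S_def C_def)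
  then have "chain_support z' \<subset> S" by (auto simp: z'_def S_def chain_support_def)
  with \<open>boundary D 2 z' = 0\<close> have "z' = 0" using min by (simp add: minimal_2cycle_def S_def)
  obtain T0 where T0: "T0 \<in> S" "v0 \<in> T0" using v0 by (auto simp: S_def)
  moreover have "v0 \<in> C" by (simp add: C_def)
  ultimately have "T0 \<subseteq> C" using closed by blast
  then have "z' T0 \<noteq> 0" using T0 by (simp add: z'_def S_def chain_support_def)
  with \<open>z' = 0\<close> show False by simp
qed

text \<open>Minimality: the boundaries of all support triangles but one are linearly independent,
  since a relation among them is the boundary of a cycle with smaller support.\<close>
lemma minimal_2cycle_triangle_boundaries_independent:
  fixes z :: "'a::linorder set \<Rightarrow> 'k::field"
  assumes finD: "finite D" and min: "minimal_2cycle D z" and T0: "T0 \<in> chain_support z"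
  shows "inj_on (\<lambda>T. boundary D 2 (chi T :: 'a set \<Rightarrow> 'k)) (chain_support z - {T0})"
    and "vs.independent ((\<lambda>T. boundary D 2 (chi T :: 'a set \<Rightarrow> 'k)) ` (chain_support z - {T0}))"
proof -
  define S' where "S' = chain_support z - {T0}"
  have finS': "finite S'"
    using finite_chain_support[OF finD] min by (auto simp: S'_def minimal_2cycle_def)
  interpret bd: linear sc sc "boundary D 2 :: ('a set \<Rightarrow> 'k) \<Rightarrow> _"
    by (rule linear_boundary)
  have "\<forall>T\<in>S'. c T = 0" if rel: "(\<Sum>T\<in>S'. sc (c T) (boundary D 2 (chi T :: 'a set \<Rightarrow> 'k))) = 0" for c
  proof -
    define y where "y = (\<Sum>T\<in>S'. sc (c T) (chi T :: 'a set \<Rightarrow> 'k))"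
    have y: "y F = (if F \<in> S' then c F else 0)" for F
      unfolding y_def using finS' by (rule sum_chi_apply)
    have "boundary D 2 y = 0" using rel by (simp add: y_def bd.sum bd.scale)
    moreover have "chain_support y \<subset> chain_support z"
      using T0 by (auto simp: chain_support_def y S'_def)
    ultimately have "y = 0" using min by (simp add: minimal_2cycle_def)
    then show ?thesis using y by (metis zero_fun_def)
  qed
  then show "inj_on (\<lambda>T. boundary D 2 (chi T :: 'a set \<Rightarrow> 'k)) (chain_support z - {T0})"
    and "vs.independent ((\<lambda>T. boundary D 2 (chi T :: 'a set \<Rightarrow> 'k)) ` (chain_support z - {T0}))"
    using independent_familyI[OF finS', where f = "\<lambda>T. boundary D 2 (chi T)"]
    unfolding S'_def by blast+
qed


subsection \<open>Counting vertices, edges and triangles\<close>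

lemma finite_edges_of:
  assumes "finite S" "\<forall>F\<in>S. finite F"
  shows "finite (edges_of S)"
proof -
  have "edges_of S \<subseteq> Pow (\<Union>S)" by (auto simp: edges_of_def)
  then show ?thesis using assms by (meson finite_Pow_iff finite_Union finite_subset)
qed

text \<open>Double counting of incident (edge, triangle) pairs: if every edge lies in two
  triangles, then \<open>2|E| \<le> 3|S|\<close>.\<close>
lemma card_edges_of_le:
  fixes S :: "'a set set"
  assumes finS: "finite S" and S3: "\<forall>F\<in>S. card F = 3"
    and two: "\<And>G. G \<in> edges_of S \<Longrightarrow> \<exists>F1\<in>S. \<exists>F2\<in>S. F1 \<noteq> F2 \<and> G \<subseteq> F1 \<and> G \<subseteq> F2"
  shows "2 * card (edges_of S) \<le> 3 * card S"
proof -
  define E where "E = edges_of S"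
  have finE: "finite E"
    unfolding E_def using finS S3 by (intro finite_edges_of) (auto intro: card_ge_0_finite)
  have ge2: "2 \<le> card {F\<in>S. G \<subseteq> F}" if GE: "G \<in> E" for G
  proof -
    obtain F1 F2 where "F1 \<in> S" "F2 \<in> S" "F1 \<noteq> F2" "G \<subseteq> F1" "G \<subseteq> F2"
      using two[of G] GE unfolding E_def by blast
    then have "card {F1, F2} \<le> card {F\<in>S. G \<subseteq> F}" using finS by (intro card_mono) auto
    then show ?thesis using \<open>F1 \<noteq> F2\<close> by simp
  qed
  have eq3: "card {G\<in>E. G \<subseteq> F} = 3" if "F \<in> S" for F
  proof -
    have "{G\<in>E. G \<subseteq> F} = {G. G \<subseteq> F \<and> card G = 2}" using that by (auto simp: E_def edges_of_def)
    moreover have "finite F" using that S3 by (auto intro: card_ge_0_finite)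
    ultimately show ?thesis using n_subsets[of F 2] S3 that by (simp add: choose_two)
  qed
  have card_filter: "card {x\<in>A. P x} = (\<Sum>x\<in>A. if P x then 1 else 0)" if "finite A"
    for A :: "'a set set" and P
    using that by (simp add: sum.inter_filter[symmetric])
  have "2 * card E = (\<Sum>G\<in>E. 2)" by simp
  also have "\<dots> \<le> (\<Sum>G\<in>E. card {F\<in>S. G \<subseteq> F})" by (rule sum_mono) (rule ge2)
  also have "\<dots> = (\<Sum>F\<in>S. card {G\<in>E. G \<subseteq> F})"
    using finS finE by (simp add: card_filter sum.swap[of _ E S])
  also have "\<dots> = 3 * card S" by (simp add: eq3)
  finally show ?thesis by (simp add: E_def)
qed

lemma vertex_differences_independent:
  assumes "finite V"
  shows "inj_on (\<lambda>u. chi u - chi v0 :: 'a \<Rightarrow> 'k::field) (V - {v0})"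
    and "vs.independent ((\<lambda>u. chi u - chi v0 :: 'a \<Rightarrow> 'k) ` (V - {v0}))"
proof -
  have "\<forall>w\<in>V - {v0}. c w = 0"
    if rel: "(\<Sum>u\<in>V - {v0}. sc (c u) (chi u - chi v0 :: 'a \<Rightarrow> 'k)) = 0" for c
  proof
    fix w assume w: "w \<in> V - {v0}"
    have "0 = (\<Sum>u\<in>V - {v0}. sc (c u) (chi u - chi v0 :: 'a \<Rightarrow> 'k)) w" using rel by simp
    also have "\<dots> = (\<Sum>u\<in>V - {v0}. if w = u then c u else 0)"
      unfolding sum_fun_apply using w by (intro sum.cong) (auto simp: sc_def chi_def)
    also have "\<dots> = c w" using w assms by simp
    finally show "c w = 0" by simp
  qed
  then show "inj_on (\<lambda>u. chi u - chi v0 :: 'a \<Rightarrow> 'k) (V - {v0})"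
    and "vs.independent ((\<lambda>u. chi u - chi v0 :: 'a \<Rightarrow> 'k) ` (V - {v0}))"
    using independent_familyI[where I = "V - {v0}" and f = "\<lambda>u. chi u - chi v0"] assms by blast+
qed

text \<open>Along a path in the edge graph, \<open>\<chi>\<^sub>u - \<chi>\<^sub>v\<^sub>0\<close> is a telescoping sum of edge boundaries.\<close>
lemma vertex_difference_in_span:
  fixes S :: "'a::linorder set set"
  assumes finV: "finite (\<Union>S)" and path: "(v0, u) \<in> (adjacent S)\<^sup>*"
  shows "(chi u - chi v0 :: 'a \<Rightarrow> 'k::field) \<in> vs.span (edge_boundary (\<Union>S) ` chi ` edges_of S)"
  using path
proof (induction rule: rtrancl_induct)
  case base
  show ?case by (simp only: diff_self vs.span_zero)
next
  case (step u w)
  then have uw: "{u, w} \<in> edges_of S" by (simp add: adjacent_def)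
  then have "u \<noteq> w" "u \<in> \<Union>S" "w \<in> \<Union>S" by (auto simp: edges_of_def card_insert_if split: if_splits)
  have "chi w - chi u = sc (if u < w then 1 else -1)
      (edge_boundary (\<Union>S) (chi {u, w}) :: 'a \<Rightarrow> 'k)"
    unfolding edge_boundary_chi[OF \<open>u \<noteq> w\<close> \<open>u \<in> \<Union>S\<close> \<open>w \<in> \<Union>S\<close> finV]
    by (auto simp: sc_def fun_eq_iff)
  also have "\<dots> \<in> vs.span (edge_boundary (\<Union>S) ` chi ` edges_of S)"
    using uw by (intro vs.span_scale vs.span_base) auto
  finally have "(chi w - chi u) + (chi u - chi v0 :: 'a \<Rightarrow> 'k) \<in> vs.span (edge_boundary (\<Union>S) ` chi ` edges_of S)"
    using step.IH by (rule vs.span_add)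
  moreover have "(chi w - chi u) + (chi u - chi v0) = (chi w - chi v0 :: 'a \<Rightarrow> 'k)"
    by (simp add: fun_eq_iff)
  ultimately show ?case by metis
qed

text \<open>The Euler-type bound \<open>|S| + |V| \<le> |E| + 2\<close> for the support \<open>S\<close> of a minimal 2-cycle:
  apply the kernel/image count to \<open>\<partial>\<^sub>1\<close> on the span of the edge indicators, with the
  triangle boundaries in the kernel and the vertex differences in the image.\<close>
lemma minimal_2cycle_euler_bound:
  fixes z :: "'a::linorder set \<Rightarrow> 'k::field"
  assumes cx: "simplicial_complex D" and min: "minimal_2cycle D z"
  shows "card (chain_support z) + card (\<Union>(chain_support z)) \<le> card (edges_of (chain_support z)) + 2"
proof -
  define S where "S = chain_support z"
  define V where "V = \<Union>S"
  define E where "E = edges_of S"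
  note S = minimal_2cycle_support[OF cx min, folded S_def]
  have finD: "finite D" using cx by (simp add: simplicial_complex_def)
  have finV: "finite V"
    unfolding V_def using S(1,3) by (intro finite_Union) (auto intro: card_ge_0_finite)
  have finE: "finite E" unfolding E_def using S by (intro finite_edges_of) (auto intro: card_ge_0_finite)
  obtain T0 where T0: "T0 \<in> S" using S(4) by blast
  then obtain v0 where v0: "v0 \<in> T0" using S(3) by fastforce
  have v0V: "v0 \<in> V" using T0 v0 by (auto simp: V_def)
  define K where "K = (\<lambda>T. boundary D 2 (chi T :: 'a set \<Rightarrow> 'k)) ` (S - {T0})"
  define Y where "Y = (\<lambda>u. chi u - chi v0 :: 'a \<Rightarrow> 'k) ` (V - {v0})"
  have "card K + card Y \<le> card (chi ` E :: ('a set \<Rightarrow> 'k) set)"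
  proof (rule linear.card_kernel_plus_card_image_le[OF linear_edge_boundary[of V]])
    show "finite (chi ` E :: ('a set \<Rightarrow> 'k) set)" using finE by simp
    show "K \<subseteq> vs.span (chi ` E)"
      using S(2,3) finE by (auto simp: K_def E_def edges_of_def intro!: boundary_triangle_in_span[OF cx])
    show "vs.independent K"
      unfolding K_def S_def using minimal_2cycle_triangle_boundaries_independent(2)[OF finD min] T0
      by (simp add: S_def)
    show "edge_boundary V k = 0" if "k \<in> K" for k
    proof -
      obtain T where T: "T \<in> S" "k = boundary D 2 (chi T)" using \<open>k \<in> K\<close> by (auto simp: K_def)
      have "T \<subseteq> V" using T(1) by (auto simp: V_def)
      then show ?thesis using T S(2,3) edge_boundary_triangle_boundary[OF cx _ _ _ finV] by blast
    qed
    show "vs.independent Y"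
      unfolding Y_def using vertex_differences_independent(2)[OF finV] .
    have "V \<subseteq> {u. (v0, u) \<in> (adjacent S)\<^sup>*}"
      using minimal_2cycle_connected[OF min] v0V by (simp add: V_def S_def)
    then show "Y \<subseteq> vs.span (edge_boundary V ` chi ` E)"
      using vertex_difference_in_span finV by (auto simp: Y_def V_def E_def)
  qed
  moreover have "card K = card S - 1"
    using minimal_2cycle_triangle_boundaries_independent(1)[OF finD min] T0 S(1)
    by (simp add: K_def S_def card_image)
  moreover have "card Y = card V - 1"
    using v0V finV by (simp add: Y_def card_image[OF vertex_differences_independent(1)[OF finV]])
  moreover have "card (chi ` E :: ('a set \<Rightarrow> 'k) set) \<le> card E" using finE by (rule card_image_le)
  moreover have "card S \<ge> 1" "card V \<ge> 1"
    using T0 S(1) v0V finV by (auto simp: Suc_le_eq card_gt_0_iff)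
  ultimately show ?thesis by (simp add: S_def V_def E_def)
qed

text \<open>Combining \<open>2|E| \<le> 3|S|\<close> with the Euler-type bound.\<close>
lemma minimal_2cycle_vertex_bound:
  fixes z :: "'a::linorder set \<Rightarrow> 'k::field"
  assumes cx: "simplicial_complex D" and min: "minimal_2cycle D z"
  shows "2 * card (\<Union>(chain_support z)) \<le> card (chain_support z) + 4"
proof -
  note S = minimal_2cycle_support[OF cx min]
  have z: "z \<in> chains TYPE('k) D 2" "boundary D 2 z = 0" using min by (auto simp: minimal_2cycle_def)
  have "\<exists>F1\<in>chain_support z. \<exists>F2\<in>chain_support z. F1 \<noteq> F2 \<and> G \<subseteq> F1 \<and> G \<subseteq> F2"
    if GE: "G \<in> edges_of (chain_support z)" for G
  proof -
    obtain F where "F \<in> chain_support z" "G \<subseteq> F" "card G = 2" using GE by (auto simp: edges_of_def)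
    then show ?thesis using cycle_face_in_two_cofaces[OF cx z] by metis
  qed
  then have "2 * card (edges_of (chain_support z)) \<le> 3 * card (chain_support z)"
    using S by (intro card_edges_of_le) auto
  then show ?thesis using minimal_2cycle_euler_bound[OF cx min] by linarith
qed


theorem mainTheorem16:
  fixes \<Gamma> :: "'a::linorder set set" and W :: "'a set"
  assumes "simplicial_complex \<Gamma>"
    and "two_dimensional \<Gamma>"
    and "balanced2 \<Gamma>"
    and "W \<subseteq> vertices \<Gamma>"
    and "reduced_homology_nonzero TYPE('k::field) (induced \<Gamma> W) 2"
    and "\<And>W'. W' \<subset> W \<Longrightarrow> \<not> reduced_homology_nonzero TYPE('k) (induced \<Gamma> W') 2"
  shows "int (f2 (induced \<Gamma> W)) \<ge> 2 * int (card W) - 4"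
proof -
  define D where "D = induced \<Gamma> W"
  have cx: "simplicial_complex D" unfolding D_def using assms(1) by (rule simplicial_complex_induced)
  have dim: "\<forall>F\<in>\<Gamma>. card F \<le> 3" using assms(2) by (simp add: two_dimensional_def)
  then obtain z0 :: "'a set \<Rightarrow> 'k" where "z0 \<in> chains TYPE('k) D 2" "boundary D 2 z0 = 0" "z0 \<noteq> 0"
    using assms(5) reduced_homology2_iff[of D] by (auto simp: D_def induced_def)
  then obtain z :: "'a set \<Rightarrow> 'k" where min: "minimal_2cycle D z"
    using minimal_2cycle_exists cx by (metis simplicial_complex_def)
  define S where "S = chain_support z"
  have "\<Union>S = W"
    using cycle_support_covers_homology_minimal_set[OF assms(1) dim _ _ _ assms(6)] min
    by (simp add: S_def D_def minimal_2cycle_def)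
  moreover have "2 * card (\<Union>S) \<le> card S + 4"
    unfolding S_def by (rule minimal_2cycle_vertex_bound[OF cx min])
  moreover have "card S \<le> f2 D"
    unfolding f2_def S_def using cx minimal_2cycle_support[OF cx min]
    by (intro card_mono) (auto simp: simplicial_complex_def)
  ultimately show ?thesis by (simp add: D_def)
qed

end
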